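(* Let $m\neq\pm1$ be a square-free integer, $p$ a prime, $k$ a positive integer, $\alpha$ a root of $X^{p^k}-m$, $M=\mathbb{Q}(\alpha)$, $r$ the remainder of $m$ modulo $p^{k+1}$, $s:=v_p(m^p-m)-1$, and for $t\in\mathbb{N}$ let $h^{(r)}_t(X)=\frac{X^{p^k}-r^{p^t}}{X^{p^{k-t}}-r}=\sum_{i=0}^{p^t-1} r^{i}X^{p^k-(i+1)p^{k-t}}\in\mathbb{Z}[X]$. Suppose $k\leq s$. Then the following $p^k$ elements of $M$ are algebraic integers and are linearly independent over $\mathbb{Q}$: $$\alpha^j\cdot\frac{h^{(r)}_t(\alpha)}{p^t}\quad\text{for } 0\leq t\leq k-1,\ 0\leq j\leq p^{k-t}-p^{k-t-1}-1,$$ together with $$\frac{h^{(r)}_k(\alpha)}{p^k}.$$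
   Context: $v_p$ denotes the $p$-adic valuation on $\mathbb{Q}$. *)

theory Defs
  imports Complex_Main "HOL-Computational_Algebra.Computational_Algebra"
begin

definition hpoly :: "int \<Rightarrow> nat \<Rightarrow> nat \<Rightarrow> nat \<Rightarrow> int poly" where
  "hpoly r p k t = (\<Sum>i<p ^ t. monom (r ^ i) (p ^ k - (i + 1) * p ^ (k - t)))"

definition basis_index :: "nat \<Rightarrow> nat \<Rightarrow> (nat \<times> nat) set" where
  "basis_index p k = {(t, j). t < k \<and> j < p ^ (k - t) - p ^ (k - t - 1)} \<union> {(k, 0)}"

definition basis_elem :: "int \<Rightarrow> nat \<Rightarrow> nat \<Rightarrow> complex \<Rightarrow> nat \<times> nat \<Rightarrow> complex" where
  "basis_elem r p k \<alpha> tj = (case tj of (t, j) \<Rightarrow>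
     \<alpha> ^ j * poly (map_poly of_int (hpoly r p k t)) \<alpha> / of_nat (p ^ t))"

end

(*
  With x = alpha^(p^(k-t)) and n = p^t we have x^n = m, and h_t(alpha) / p^t equals
  (x^n - r^n) / (n (x - r)) = D / (x - r) with D = (m - r^n) / n. Iterating m^p = m (mod p^(k+1))
  gives r^n = m (mod p^(t+1)), so p divides D; this makes n divide binomial(n, j) D^(j-1), which is
  what the integrality of D / (x - r) needs.

  The element indexed by (t, j) is the value at alpha of a rational polynomial of
  degree p^k - p^(k-t) + j. These degrees are pairwise distinct and below p^k, whereas X^(p^k) - m
  is irreducible over Q (Eisenstein at a prime factor of the squarefree m, plus Gauss's lemma), so
  no nonzero rational polynomial of degree below p^k vanishes at alpha.
*)
theory Submission
  imports Defs "Jordan_Normal_Form.Char_Poly" "Berlekamp_Zassenhaus.Factor_Bound"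
begin

section \<open>Algebraic integers\<close>

lemma algebraic_int_eigenvalueI:
  fixes \<psi> :: "'a :: field_char_0" and v :: "'i \<Rightarrow> 'a" and a :: "'i \<Rightarrow> 'i \<Rightarrow> int"
  assumes "finite I" and "i\<^sub>0 \<in> I" and "v i\<^sub>0 \<noteq> 0"
    and eigen: "\<And>i. i \<in> I \<Longrightarrow> \<psi> * v i = (\<Sum>j\<in>I. of_int (a i j) * v j)"
  shows "algebraic_int \<psi>"
proof -
  obtain g where g: "bij_betw g {0..<card I} I"
    using ex_bij_betw_nat_finite[OF \<open>finite I\<close>] by blast
  define n where "n = card I"
  define A :: "int mat" where "A = mat n n (\<lambda>(i, j). a (g i) (g j))"
  define V :: "'a vec" where "V = vec n (\<lambda>i. v (g i))"
  have A: "A \<in> carrier_mat n n"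
    unfolding A_def by simp
  obtain i where i: "i < n" "g i = i\<^sub>0"
    using g \<open>i\<^sub>0 \<in> I\<close> unfolding bij_betw_def n_def by (metis atLeastLessThan_iff imageE)
  have "map_mat of_int A *\<^sub>v V = \<psi> \<cdot>\<^sub>v V"
  proof (rule eq_vecI)
    fix l assume "l < dim_vec (\<psi> \<cdot>\<^sub>v V)"
    then have l: "l < n" "g l \<in> I"
      using g unfolding V_def n_def bij_betw_def by auto
    have "(map_mat of_int A *\<^sub>v V) $ l = (\<Sum>j\<in>{0..<n}. of_int (a (g l) (g j)) * v (g j))"
      using l A unfolding V_def A_def by (simp add: mult_mat_vec_def scalar_prod_def)
    also have "\<dots> = (\<Sum>j\<in>I. of_int (a (g l) j) * v j)"
      using g unfolding n_def by (rule sum.reindex_bij_betw)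
    also have "\<dots> = (\<psi> \<cdot>\<^sub>v V) $ l"
      using eigen[OF l(2)] l unfolding V_def by simp
    finally show "(map_mat of_int A *\<^sub>v V) $ l = (\<psi> \<cdot>\<^sub>v V) $ l" .
  qed (use A in \<open>simp add: V_def\<close>)
  moreover have "V \<noteq> 0\<^sub>v n"
    using i \<open>v i\<^sub>0 \<noteq> 0\<close> unfolding V_def by (metis index_vec index_zero_vec(1))
  ultimately have "eigenvalue (map_mat of_int A) \<psi>"
    using A unfolding eigenvalue_def eigenvector_def by (intro exI[of _ V]) (simp add: V_def)
  moreover have "char_poly (map_mat of_int A :: 'a mat) = map_poly of_int (char_poly A)"
    by (rule of_int_hom.char_poly_hom[OF A])
  ultimately have "poly (map_poly of_int (char_poly A)) \<psi> = 0"
    using A eigenvalue_root_char_poly[of "map_mat of_int A :: 'a mat" n] by simp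
  moreover have "lead_coeff (char_poly A) = 1"
    using degree_monic_char_poly[OF A] by simp
  ultimately show ?thesis
    unfolding algebraic_int_altdef_ipoly by blast
qed

lemma algebraic_int_powers_as_lower_powers:
  fixes x :: "'a :: field_char_0" and f :: "int poly"
  assumes "lead_coeff f = 1" and "poly (map_poly of_int f) x = 0"
  obtains C where "\<And>n. x ^ n = (\<Sum>i<degree f. of_int (C n i) * x ^ i)"
proof -
  have "\<exists>c. x ^ n = (\<Sum>i<degree f. of_int (c i) * x ^ i)" for n
  proof -
    obtain q r where qr: "pseudo_divmod (Polynomial.monom 1 n) f = (q, r)" by force
    have "f \<noteq> 0" using assms(1) by auto
    from pseudo_divmod[OF this qr] assms(1)
    have div: "Polynomial.monom 1 n = f * q + r" and deg_r: "r = 0 \<or> degree r < degree f"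
      by auto
    have "x ^ n = poly (map_poly of_int r) x"
      using arg_cong[OF div, of "\<lambda>P. poly (map_poly of_int P) x"] assms(2)
      by (simp add: hom_distribs poly_monom)
    also have "\<dots> = (\<Sum>i<degree f. of_int (Polynomial.coeff r i) * x ^ i)"
      using deg_r by (cases "r = 0") (auto simp: poly_as_sum_of_monoms' coeff_map_poly
          degree_map_poly poly_altdef intro!: sum.mono_neutral_cong_left coeff_eq_0)
    finally show ?thesis by blast
  qed
  then obtain C where "\<forall>n. x ^ n = (\<Sum>i<degree f. of_int (C n i) * x ^ i)"
    using choice[of "\<lambda>n c. x ^ n = (\<Sum>i<degree f. of_int (c i) * x ^ i)"] by blast
  with that show ?thesis by blast
qed

lemma algebraic_int_mult:
  fixes x y :: "'a :: field_char_0"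
  assumes "algebraic_int x" and "algebraic_int y"
  shows "algebraic_int (x * y)"
proof -
  obtain f where f: "poly (map_poly of_int f) x = 0" "lead_coeff f = 1"
    using assms(1) unfolding algebraic_int_altdef_ipoly by blast
  obtain g where g: "poly (map_poly of_int g) y = 0" "lead_coeff g = 1"
    using assms(2) unfolding algebraic_int_altdef_ipoly by blast
  obtain C where C: "\<And>n. x ^ n = (\<Sum>i<degree f. of_int (C n i) * x ^ i)"
    using algebraic_int_powers_as_lower_powers[OF f(2,1)] by blast
  obtain D where D: "\<And>n. y ^ n = (\<Sum>j<degree g. of_int (D n j) * y ^ j)"
    using algebraic_int_powers_as_lower_powers[OF g(2,1)] by blast
  have deg_f: "degree f \<noteq> 0"
  proof
    assume "degree f = 0"
    with C[of 0] show False by simp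
  qed
  have deg_g: "degree g \<noteq> 0"
  proof
    assume "degree g = 0"
    with D[of 0] show False by simp
  qed
  have eigen: "x * y * (x ^ i * y ^ j) = (\<Sum>(i', j')\<in>{..<degree f} \<times> {..<degree g}.
      of_int (C (Suc i) i' * D (Suc j) j') * (x ^ i' * y ^ j'))" for i j
  proof -
    have "x * y * (x ^ i * y ^ j) = x ^ Suc i * y ^ Suc j"
      by (simp add: algebra_simps)
    also have "\<dots> = (\<Sum>i'<degree f. \<Sum>j'<degree g.
        of_int (C (Suc i) i') * x ^ i' * (of_int (D (Suc j) j') * y ^ j'))"
      unfolding C[of "Suc i"] D[of "Suc j"] by (rule sum_product)
    also have "\<dots> = (\<Sum>(i', j')\<in>{..<degree f} \<times> {..<degree g}.
        of_int (C (Suc i) i' * D (Suc j) j') * (x ^ i' * y ^ j'))"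
      unfolding sum.cartesian_product by (intro sum.cong) (auto simp: algebra_simps)
    finally show ?thesis .
  qed
  show ?thesis
    by (rule algebraic_int_eigenvalueI[where I = "{..<degree f} \<times> {..<degree g}" and i\<^sub>0 = "(0, 0)"
        and v = "\<lambda>(i, j). x ^ i * y ^ j" and a = "\<lambda>(i, j) (i', j'). C (Suc i) i' * D (Suc j) j'"])
      (use eigen deg_f deg_g in \<open>auto simp: case_prod_unfold\<close>)
qed

lemma algebraic_int_power:
  fixes x :: "'a :: field_char_0"
  assumes "algebraic_int x"
  shows "algebraic_int (x ^ n)"
  by (induction n) (simp_all add: algebraic_int_mult assms)

lemma algebraic_intI_power_eq_lower_sum:
  fixes \<theta> :: "'a :: field_char_0" and c :: "nat \<Rightarrow> int"
  assumes "\<theta> ^ n = (\<Sum>k<n. of_int (c k) * \<theta> ^ k)"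
  shows "algebraic_int \<theta>"
proof -
  define P where "P = Polynomial.monom 1 n - (\<Sum>k<n. Polynomial.monom (c k) k)"
  have coeff_P: "Polynomial.coeff P i = (if i = n then 1 else if i < n then - c i else 0)" for i
    unfolding P_def by (auto simp: coeff_sum coeff_monom)
  have "degree P = n"
    by (rule antisym, rule degree_le) (auto simp: coeff_P intro!: le_degree)
  then have "lead_coeff P = 1"
    by (simp add: coeff_P)
  moreover have "poly (map_poly of_int P) \<theta> = 0"
    using assms unfolding P_def by (simp add: hom_distribs poly_sum poly_monom)
  ultimately show ?thesis
    unfolding algebraic_int_altdef_ipoly by blast
qed

lemma prime_power_dvd_binomial_mult_power:
  fixes D :: int
  assumes p: "prime p" and j: "1 \<le> j" "j \<le> p ^ t" and "int p dvd D"
  shows "int (p ^ t) dvd int (p ^ t choose j) * D ^ (j - 1)"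
proof -
  define C where "C = p ^ t choose j"
  obtain a where a: "a \<le> t" "gcd j (p ^ t) = p ^ a"
    using divides_primepow_nat[OF p, of "gcd j (p ^ t)" t] by auto
  have "p ^ t dvd C * j"
    using times_binomial_minus1_eq[of j "p ^ t"] j unfolding C_def by (simp add: mult.commute)
  then have "p ^ t dvd gcd (C * j) (C * p ^ t)"
    by simp
  also have "gcd (C * j) (C * p ^ t) = C * gcd j (p ^ t)"
    by (simp add: gcd_mult_distrib_nat)
  finally have "p ^ t dvd C * p ^ a"
    by (simp only: a(2))
  have "p ^ a dvd j"
    using gcd_dvd1[of j "p ^ t"] by (simp only: a(2))
  then have "p ^ a \<le> j"
    using j by (intro dvd_imp_le) auto
  moreover have "a < p ^ a"
    using less_exp[of a] power_mono[OF prime_ge_2_nat[OF p], of a] by linarith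
  ultimately have "p ^ a dvd p ^ (j - 1)"
    by (intro le_imp_power_dvd) linarith
  then have "C * p ^ a dvd C * p ^ (j - 1)"
    by (rule mult_dvd_mono[OF dvd_refl])
  with \<open>p ^ t dvd C * p ^ a\<close> have "p ^ t dvd C * p ^ (j - 1)"
    by (rule dvd_trans)
  then have "int (p ^ t) dvd int (C * p ^ (j - 1))"
    by (simp only: of_nat_dvd_iff)
  then have "int (p ^ t) dvd int C * int p ^ (j - 1)"
    by simp
  also have "int C * int p ^ (j - 1) dvd int C * D ^ (j - 1)"
    using \<open>int p dvd D\<close> by (intro mult_dvd_mono dvd_refl dvd_power_same)
  finally show ?thesis
    unfolding C_def .
qed

text \<open>The quotient \<open>\<theta> = D / (x - r)\<close> satisfies \<open>m \<theta>\<^sup>n = (r \<theta> + D)\<^sup>n\<close>; in the binomial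
  expansion every coefficient below the top one is divisible by \<open>n D = m - r\<^sup>n\<close>, so cancelling
  \<open>n D\<close> leaves a monic integer equation. When \<open>D = 0\<close> or \<open>x = r\<close> the quotient is \<open>0\<close>.\<close>

lemma algebraic_int_of_int_div_sub:
  fixes x :: "'a :: field_char_0" and m r D :: int
  assumes "n > 0" and x: "x ^ n = of_int m" and D: "m - r ^ n = int n * D"
    and dvd: "\<And>j. 1 \<le> j \<Longrightarrow> j \<le> n \<Longrightarrow> int n dvd int (n choose j) * D ^ (j - 1)"
  shows "algebraic_int (of_int D / (x - of_int r))"
proof (cases "D = 0 \<or> x = of_int r")
  case False
  define \<theta> where "\<theta> = of_int D / (x - of_int r)"
  have \<theta>: "(x - of_int r) * \<theta> = of_int D"
    using False by (simp add: \<theta>_def)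
  define E where "E k = int (n choose k) * D ^ (n - k - 1) * r ^ k div int n" for k
  have E: "int n * E k = int (n choose k) * D ^ (n - k - 1) * r ^ k" if "k < n" for k
  proof -
    have "int n dvd int (n choose (n - k)) * D ^ (n - k - 1)"
      using dvd[of "n - k"] that by simp
    then show ?thesis
      using that unfolding E_def by (simp add: binomial_symmetric[of k n, symmetric])
  qed
  have "of_int m * \<theta> ^ n = (of_int r + (x - of_int r)) ^ n * \<theta> ^ n"
    using x by simp
  also have "\<dots> = (\<Sum>k\<le>n. of_nat (n choose k) * of_int r ^ k * ((x - of_int r) * \<theta>) ^ (n - k) * \<theta> ^ k)"
    unfolding binomial_ring sum_distrib_right
    by (intro sum.cong refl) (simp add: power_mult_distrib mult_ac flip: power_add)
  also have "\<dots> = of_int r ^ n * \<theta> ^ n + (\<Sum>k<n. of_int (int (n choose k) * r ^ k * D ^ (n - k)) * \<theta> ^ k)"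
    unfolding \<theta> by (simp add: lessThan_Suc_atMost[symmetric])
  also have "(\<Sum>k<n. of_int (int (n choose k) * r ^ k * D ^ (n - k)) * \<theta> ^ k)
      = of_int (int n * D) * (\<Sum>k<n. of_int (E k) * \<theta> ^ k)"
    unfolding sum_distrib_left
  proof (intro sum.cong refl)
    fix k assume "k \<in> {..<n}"
    then have "int (n choose k) * r ^ k * D ^ (n - k) = D * (int n * E k)"
      by (simp add: E power_eq_if)
    then show "of_int (int (n choose k) * r ^ k * D ^ (n - k)) * \<theta> ^ k
        = of_int (int n * D) * (of_int (E k) * \<theta> ^ k)"
      by (metis (no_types, lifting) mult.assoc mult.left_commute of_int_mult)
  qed
  finally have "of_int (m - r ^ n) * \<theta> ^ n = of_int (int n * D) * (\<Sum>k<n. of_int (E k) * \<theta> ^ k)"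
    by (simp add: algebra_simps)
  then have "\<theta> ^ n = (\<Sum>k<n. of_int (E k) * \<theta> ^ k)"
    using D False \<open>n > 0\<close> by simp
  then show ?thesis
    unfolding \<theta>_def by (rule algebraic_intI_power_eq_lower_sum)
qed auto

lemma algebraic_int_geometric_sum_div_prime_power:
  fixes x :: "'a :: field_char_0" and m r :: int
  assumes p: "prime p" and x: "x ^ (p ^ t) = of_int m"
    and cong: "int p ^ (t + 1) dvd m - r ^ (p ^ t)"
  shows "algebraic_int ((\<Sum>i<p ^ t. of_int r ^ i * x ^ (p ^ t - 1 - i)) / of_nat (p ^ t))"
proof -
  define n where "n = p ^ t"
  define \<theta> where "\<theta> = (\<Sum>i<n. of_int r ^ i * x ^ (n - 1 - i)) / (of_nat n :: 'a)"
  have "n > 0"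
    using p by (simp add: n_def prime_gt_0_nat)
  obtain K where K: "m - r ^ n = int p ^ (t + 1) * K"
    using cong unfolding n_def by blast
  define D where "D = int p * K"
  have D: "m - r ^ n = int n * D"
    using K unfolding D_def n_def by (simp add: mult_ac)
  have "algebraic_int \<theta>"
  proof (cases "x = of_int r")
    case True
    then have "\<theta> = of_int (r ^ (n - 1))"
      using \<open>n > 0\<close> unfolding \<theta>_def by (simp flip: power_add)
    then show ?thesis
      by (metis algebraic_int_of_int)
  next
    case False
    have "(of_int r - x) * (\<Sum>i<n. of_int r ^ i * x ^ (n - 1 - i)) = of_int r ^ n - x ^ n"
      using power_diff_sumr2[of "of_int r" n x] by (simp add: mult_ac)
    then have "\<theta> = of_int D / (x - of_int r)"
      using x D \<open>n > 0\<close> False unfolding \<theta>_def n_def by (simp add: field_simps)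
    have "int p dvd D"
      unfolding D_def by simp
    then have "int n dvd int (n choose j) * D ^ (j - 1)" if "1 \<le> j" "j \<le> n" for j
      using prime_power_dvd_binomial_mult_power[OF p] that unfolding n_def by simp
    with \<open>\<theta> = of_int D / (x - of_int r)\<close> show ?thesis
      using algebraic_int_of_int_div_sub[OF \<open>n > 0\<close> x[folded n_def] D] by simp
  qed
  then show ?thesis
    unfolding \<theta>_def n_def .
qed

section \<open>Integrality of the basis elements\<close>

lemma coeff_hpoly:
  "Polynomial.coeff (hpoly r p k t) e = (\<Sum>i<p ^ t. if p ^ k - (i + 1) * p ^ (k - t) = e then r ^ i else 0)"
  unfolding hpoly_def by (simp add: coeff_sum coeff_monom)

lemma poly_hpoly:
  fixes \<alpha> :: "'a :: comm_ring_1"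
  assumes "t \<le> k"
  shows "poly (map_poly of_int (hpoly r p k t)) \<alpha> =
    (\<Sum>i<p ^ t. of_int r ^ i * (\<alpha> ^ p ^ (k - t)) ^ (p ^ t - 1 - i))"
proof -
  have "poly (map_poly of_int (hpoly r p k t)) \<alpha> =
      (\<Sum>i<p ^ t. of_int r ^ i * \<alpha> ^ (p ^ k - (i + 1) * p ^ (k - t)))"
    unfolding hpoly_def by (simp add: hom_distribs poly_sum poly_monom)
  also have "\<dots> = (\<Sum>i<p ^ t. of_int r ^ i * (\<alpha> ^ p ^ (k - t)) ^ (p ^ t - 1 - i))"
  proof (intro sum.cong refl)
    fix i assume "i \<in> {..<p ^ t}"
    have "p ^ k = p ^ t * p ^ (k - t)"
      using assms by (simp flip: power_add)
    then have "p ^ k - (i + 1) * p ^ (k - t) = (p ^ t - (i + 1)) * p ^ (k - t)"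
      by (simp only: diff_mult_distrib)
    also have "\<dots> = p ^ (k - t) * (p ^ t - 1 - i)"
      by (simp add: ac_simps)
    finally show "of_int r ^ i * \<alpha> ^ (p ^ k - (i + 1) * p ^ (k - t)) =
        of_int r ^ i * (\<alpha> ^ p ^ (k - t)) ^ (p ^ t - 1 - i)"
      by (simp only: power_mult)
  qed
  finally show ?thesis .
qed

lemma
  assumes "p > 0" and "t \<le> k"
  shows degree_hpoly: "degree (hpoly r p k t) = p ^ k - p ^ (k - t)"
    and lead_coeff_hpoly: "lead_coeff (hpoly r p k t) = 1"
proof -
  define d where "d = p ^ (k - t)"
  have "d \<ge> 1"
    using assms by (simp add: d_def)
  have "p ^ k = p ^ t * d"
    using assms by (simp add: d_def flip: power_add)
  then have le: "(i + 1) * d \<le> p ^ k" if "i < p ^ t" for i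
    using mult_le_mono1[of "i + 1" "p ^ t" d] that by simp
  have "Polynomial.coeff (hpoly r p k t) (p ^ k - d) = (\<Sum>i<p ^ t. if i = 0 then r ^ i else 0)"
    unfolding coeff_hpoly d_def[symmetric]
  proof (intro sum.cong refl)
    fix i assume "i \<in> {..<p ^ t}"
    then have "(i + 1) * d \<le> p ^ k" "d \<le> p ^ k"
      using le[of i] le[of 0] assms by auto
    then have "p ^ k - (i + 1) * d = p ^ k - d \<longleftrightarrow> (i + 1) * d = d"
      by arith
    also have "\<dots> \<longleftrightarrow> i = 0"
      using \<open>d \<ge> 1\<close> by simp
    finally show "(if p ^ k - (i + 1) * d = p ^ k - d then r ^ i else 0) = (if i = 0 then r ^ i else 0)"
      by simp
  qed
  also have "\<dots> = 1"
    using assms by simp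
  finally have top: "Polynomial.coeff (hpoly r p k t) (p ^ k - d) = 1" .
  have "Polynomial.coeff (hpoly r p k t) e = 0" if "e > p ^ k - d" for e
    unfolding coeff_hpoly using that \<open>d \<ge> 1\<close>
    by (intro sum.neutral ballI) (auto simp flip: d_def intro: diff_le_mono2[THEN le_less_trans])
  then have "degree (hpoly r p k t) = p ^ k - d"
    using top by (intro antisym degree_le le_degree) auto
  then show "degree (hpoly r p k t) = p ^ k - p ^ (k - t)" and "lead_coeff (hpoly r p k t) = 1"
    using top by (simp_all add: d_def)
qed

lemma basis_index_fst_le: "(t, j) \<in> basis_index p k \<Longrightarrow> t \<le> k"
  by (auto simp: basis_index_def)

lemma finite_basis_index: "finite (basis_index p k)"
proof (rule finite_subset)
  show "basis_index p k \<subseteq> insert (k, 0) (SIGMA t:{..<k}. {..<p ^ (k - t)})"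
    by (auto simp: basis_index_def)
qed auto

lemma dvd_diff_power_prime_power:
  fixes m r Q :: int
  assumes "Q dvd m ^ p - m" and "r mod Q = m mod Q"
  shows "Q dvd m - r ^ (p ^ s)"
proof -
  have "m ^ (p ^ s) mod Q = m mod Q"
  proof (induction s)
    case (Suc s)
    have "m ^ p ^ Suc s = (m ^ p ^ s) ^ p"
      by (simp only: power_Suc2 power_mult)
    then have "m ^ p ^ Suc s mod Q = (m ^ p ^ s mod Q) ^ p mod Q"
      by (simp add: power_mod)
    also have "\<dots> = (m mod Q) ^ p mod Q"
      using Suc by simp
    also have "\<dots> = m mod Q"
      using assms(1) by (simp add: power_mod mod_eq_dvd_iff)
    finally show ?case .
  qed simp
  then have "r ^ (p ^ s) mod Q = m mod Q"
    using assms(2) by (metis power_mod)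
  then show ?thesis
    by (simp add: mod_eq_dvd_iff dvd_diff_commute)
qed

lemma algebraic_int_basis_elem:
  fixes m r :: int and \<alpha> :: complex
  assumes "prime p" and \<alpha>: "\<alpha> ^ (p ^ k) = of_int m" and "int p ^ (k + 1) dvd m ^ p - m"
    and "r mod int p ^ (k + 1) = m mod int p ^ (k + 1)" and "(t, j) \<in> basis_index p k"
  shows "algebraic_int (basis_elem r p k \<alpha> (t, j))"
proof -
  have "t \<le> k"
    using assms(5) by (rule basis_index_fst_le)
  define x where "x = \<alpha> ^ p ^ (k - t)"
  have "x ^ p ^ t = of_int m"
    using \<alpha> \<open>t \<le> k\<close> by (simp add: x_def flip: power_mult power_add)
  moreover have "int p ^ (t + 1) dvd int p ^ (k + 1)"
    using \<open>t \<le> k\<close> by (simp add: le_imp_power_dvd)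
  then have "int p ^ (t + 1) dvd m - r ^ p ^ t"
    using dvd_diff_power_prime_power[OF assms(3,4)] by (rule dvd_trans)
  ultimately have "algebraic_int ((\<Sum>i<p ^ t. of_int r ^ i * x ^ (p ^ t - 1 - i)) / of_nat (p ^ t))"
    by (rule algebraic_int_geometric_sum_div_prime_power[OF \<open>prime p\<close>])
  moreover have "algebraic_int \<alpha>"
  proof (rule algebraic_int_root)
    show "poly (Polynomial.monom 1 (p ^ k)) \<alpha> = of_int m"
      using \<alpha> by (simp add: poly_monom)
  qed (use \<open>prime p\<close> in \<open>auto simp: degree_monom_eq coeff_monom prime_gt_0_nat\<close>)
  ultimately show ?thesis
    unfolding basis_elem_def x_def using poly_hpoly[OF \<open>t \<le> k\<close>, of r p \<alpha>]
    by (simp add: algebraic_int_mult algebraic_int_power flip: times_divide_eq_right)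
qed

section \<open>Irreducibility of \<open>X\<^sup>n - m\<close>\<close>

lemma eisenstein_factor_degree_eq_0:
  fixes g h :: "int poly" and q :: int
  assumes "prime q" and "g * h \<noteq> 0"
    and coeffs: "\<And>i. i < degree (g * h) \<Longrightarrow> q dvd Polynomial.coeff (g * h) i"
    and "q dvd Polynomial.coeff g 0" and h0: "\<not> q dvd Polynomial.coeff h 0"
    and "is_unit (lead_coeff g)"
  shows "degree h = 0"
proof (rule ccontr)
  assume "degree h \<noteq> 0"
  then have deg: "degree g < degree (g * h)"
    using \<open>g * h \<noteq> 0\<close> by (simp add: degree_mult_eq)
  have "q dvd Polynomial.coeff g i" if "i \<le> degree g" for i
    using that
  proof (induction i rule: less_induct)
    case (less i)
    have "{..i} = insert i {..<i}"
      by auto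
    then have "Polynomial.coeff (g * h) i = Polynomial.coeff g i * Polynomial.coeff h 0 +
        (\<Sum>j<i. Polynomial.coeff g j * Polynomial.coeff h (i - j))"
      unfolding coeff_mult by simp
    moreover have "q dvd (\<Sum>j<i. Polynomial.coeff g j * Polynomial.coeff h (i - j))"
      using less by (intro dvd_sum dvd_mult2) auto
    moreover have "q dvd Polynomial.coeff (g * h) i"
      using coeffs less.prems deg by simp
    ultimately have "q dvd Polynomial.coeff g i * Polynomial.coeff h 0"
      by (simp add: dvd_add_left_iff)
    then show ?case
      using \<open>prime q\<close> h0 by (simp add: prime_dvd_mult_iff)
  qed
  then have "q dvd 1"
    using \<open>is_unit (lead_coeff g)\<close> dvd_trans by blast
  then show False
    using \<open>prime q\<close> not_prime_unit by blast
qed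

lemma coeff_monom_minus_const:
  fixes c :: "'a :: comm_ring_1"
  shows "Polynomial.coeff (Polynomial.monom 1 n - [:c:]) i = (if i = n then 1 else 0) - (if i = 0 then c else 0)"
  by (simp add: coeff_monom coeff_pCons split: nat.split)

lemma degree_monom_minus_const:
  fixes c :: "'a :: comm_ring_1"
  assumes "n > 0"
  shows "degree (Polynomial.monom 1 n - [:c:]) = n"
  using assms by (intro antisym degree_le le_degree) (auto simp: coeff_monom coeff_pCons split: nat.split)

lemma degree_factor_monom_minus_squarefree:
  fixes m :: int and g h :: "int poly"
  assumes "squarefree m" and "\<not> is_unit m" and "n > 0"
    and gh: "Polynomial.monom 1 n - [:m:] = g * h"
  shows "degree g = 0 \<or> degree h = 0"
proof -
  have "m \<noteq> 0"
    using \<open>squarefree m\<close> by auto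
  then obtain q where q: "prime q" "q dvd m"
    using prime_divisor_exists \<open>\<not> is_unit m\<close> by blast
  have not_sq: "\<not> q ^ 2 dvd m"
    using squarefreeD[OF \<open>squarefree m\<close>, of q] not_prime_unit[of q] q(1) by blast
  have coeff_gh: "Polynomial.coeff (g * h) i = (if i = n then 1 else 0) - (if i = 0 then m else 0)" for i
    unfolding gh[symmetric] by (rule coeff_monom_minus_const)
  have "degree (g * h) = n"
    unfolding gh[symmetric] using \<open>n > 0\<close> by (rule degree_monom_minus_const)
  then have "g * h \<noteq> 0" "lead_coeff g * lead_coeff h = 1"
    using \<open>n > 0\<close> coeff_gh[of n] by (auto simp flip: lead_coeff_mult)
  then have units: "is_unit (lead_coeff g)" "is_unit (lead_coeff h)"
    using is_unit_mult_iff[of "lead_coeff g" "lead_coeff h"] by simp_all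
  have coeffs: "q dvd Polynomial.coeff (g * h) i" if "i < degree (g * h)" for i
    using that q \<open>degree (g * h) = n\<close> by (simp add: coeff_gh)
  have "Polynomial.coeff g 0 * Polynomial.coeff h 0 = - m"
    using coeff_gh[of 0] \<open>n > 0\<close> by (simp add: coeff_mult_0)
  then have "q dvd Polynomial.coeff g 0 * Polynomial.coeff h 0"
    and "\<not> q * q dvd Polynomial.coeff g 0 * Polynomial.coeff h 0"
    using q(2) not_sq by (simp_all add: power2_eq_square)
  then consider "q dvd Polynomial.coeff g 0" "\<not> q dvd Polynomial.coeff h 0"
    | "q dvd Polynomial.coeff h 0" "\<not> q dvd Polynomial.coeff g 0"
    using prime_dvd_mult_iff[OF q(1)] mult_dvd_mono[of q _ q] by blast
  then show ?thesis
  proof cases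
    case 1
    with q(1) \<open>g * h \<noteq> 0\<close> coeffs units(1) have "degree h = 0"
      by (intro eisenstein_factor_degree_eq_0)
    then show ?thesis ..
  next
    case 2
    with q(1) \<open>g * h \<noteq> 0\<close> coeffs units(2) have "degree g = 0"
      by (intro eisenstein_factor_degree_eq_0[of q h g]) (simp_all add: mult.commute)
    then show ?thesis ..
  qed
qed

lemma poly_of_rat_gcd_eq_0:
  fixes P Q :: "rat poly" and \<alpha> :: "'a :: field_char_0"
  assumes "poly (map_poly of_rat P) \<alpha> = 0" and "poly (map_poly of_rat Q) \<alpha> = 0"
  shows "poly (map_poly of_rat (gcd P Q)) \<alpha> = 0"
proof -
  interpret of_rat_poly_hom: map_poly_comm_ring_hom "of_rat :: rat \<Rightarrow> 'a" ..
  have "gcd P Q = fst (bezout_coefficients P Q) * P + snd (bezout_coefficients P Q) * Q"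
    by (rule bezout_coefficients_fst_snd[symmetric])
  then show ?thesis
    using assms by (simp add: hom_distribs)
qed

lemma degree_ge_of_pure_root:
  fixes Q :: "rat poly" and \<alpha> :: "'a :: field_char_0" and m :: int
  assumes "squarefree m" and "\<not> is_unit m" and "n > 0" and \<alpha>: "\<alpha> ^ n = of_int m"
    and "Q \<noteq> 0" and root: "poly (map_poly of_rat Q) \<alpha> = 0"
  shows "n \<le> degree Q"
proof -
  define f :: "int poly" where "f = Polynomial.monom 1 n - [:m:]"
  define F :: "rat poly" where "F = map_poly of_int f"
  have "degree f = n"
    unfolding f_def using \<open>n > 0\<close> by (rule degree_monom_minus_const)
  then have "degree F = n"
    by (simp add: F_def)
  have "map_poly (of_rat :: rat \<Rightarrow> 'a) F = map_poly of_int f"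
    unfolding F_def by (simp add: map_poly_map_poly o_def)
  then have F_root: "poly (map_poly of_rat F) \<alpha> = 0"
    using \<alpha> unfolding f_def by (simp add: hom_distribs poly_monom)
  define G where "G = gcd Q F"
  have G_root: "poly (map_poly of_rat G) \<alpha> = 0"
    unfolding G_def using root F_root by (rule poly_of_rat_gcd_eq_0)
  have "G \<noteq> 0" and "G dvd Q" and "G dvd F"
    using \<open>Q \<noteq> 0\<close> by (simp_all add: G_def)
  then have "degree G \<le> degree Q"
    using \<open>Q \<noteq> 0\<close> by (simp add: dvd_imp_degree_le)
  have "degree G \<noteq> 0"
  proof
    assume "degree G = 0"
    then obtain c where "G = [:c:]"
      by (elim degree_eq_zeroE)
    then show False
      using G_root \<open>G \<noteq> 0\<close> by simp
  qed
  obtain H where FGH: "F = G * H"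
    using \<open>G dvd F\<close> by blast
  then obtain g h where gh: "f = g * h" "degree g = degree G" "degree h = degree H"
    using rat_to_int_factor[of f G H] unfolding F_def by blast
  have "degree g = 0 \<or> degree h = 0"
    using gh(1) unfolding f_def by (rule degree_factor_monom_minus_squarefree[OF assms(1-3)])
  then have "degree H = 0"
    using gh(2,3) \<open>degree G \<noteq> 0\<close> by simp
  moreover have "H \<noteq> 0"
    using FGH \<open>degree F = n\<close> \<open>n > 0\<close> by auto
  ultimately have "degree G = n"
    using FGH \<open>degree F = n\<close> \<open>G \<noteq> 0\<close> by (simp add: degree_mult_eq)
  then show ?thesis
    using \<open>degree G \<le> degree Q\<close> by simp
qed

section \<open>Linear independence of the basis elements\<close>

lemma sum_smult_eq_0_distinct_degrees:
  fixes P :: "'i \<Rightarrow> 'a :: idom poly"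
  assumes "finite I" and inj: "inj_on (\<lambda>i. degree (P i)) I" and nz: "\<And>i. i \<in> I \<Longrightarrow> P i \<noteq> 0"
    and sum: "(\<Sum>i\<in>I. Polynomial.smult (c i) (P i)) = 0" and "i \<in> I"
  shows "c i = 0"
proof (rule ccontr)
  assume "c i \<noteq> 0"
  define S where "S = {i \<in> I. c i \<noteq> 0}"
  define d where "d = Max ((\<lambda>i. degree (P i)) ` S)"
  have "finite S" "S \<noteq> {}"
    using \<open>finite I\<close> \<open>i \<in> I\<close> \<open>c i \<noteq> 0\<close> by (auto simp: S_def)
  then obtain i\<^sub>0 where i\<^sub>0: "i\<^sub>0 \<in> S" "degree (P i\<^sub>0) = d"
    unfolding d_def by (metis (no_types, lifting) Max_in finite_imageI image_iff image_is_empty)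
  have below: "Polynomial.coeff (P i) d = 0" if "i \<in> I" "c i \<noteq> 0" "i \<noteq> i\<^sub>0" for i
  proof -
    have "degree (P i) \<le> d"
      using that \<open>finite S\<close> unfolding d_def S_def by (intro Max_ge) auto
    moreover have "degree (P i) \<noteq> d"
      using inj that i\<^sub>0 unfolding S_def inj_on_def by auto
    ultimately show ?thesis
      by (intro coeff_eq_0) simp
  qed
  have "0 = (\<Sum>i\<in>I. c i * Polynomial.coeff (P i) d)"
    using arg_cong[OF sum, of "\<lambda>Q. Polynomial.coeff Q d"] by (simp add: coeff_sum)
  also have "\<dots> = (\<Sum>i\<in>I. if i = i\<^sub>0 then c i\<^sub>0 * lead_coeff (P i\<^sub>0) else 0)"
    using below i\<^sub>0 by (intro sum.cong refl) auto
  also have "\<dots> = c i\<^sub>0 * lead_coeff (P i\<^sub>0)"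
    using \<open>finite I\<close> i\<^sub>0 by (simp add: S_def)
  finally have "c i\<^sub>0 * lead_coeff (P i\<^sub>0) = 0" ..
  then show False
    using i\<^sub>0(1) nz[of i\<^sub>0] unfolding S_def by simp
qed

definition basis_degree :: "nat \<Rightarrow> nat \<Rightarrow> nat \<times> nat \<Rightarrow> nat" where
  "basis_degree p k = (\<lambda>(t, j). p ^ k - p ^ (k - t) + j)"

lemma basis_degree_strict_mono:
  assumes "p > 0" and tj: "(t, j) \<in> basis_index p k" and "(t', j') \<in> basis_index p k" and "t < t'"
  shows "basis_degree p k (t, j) < basis_degree p k (t', j')"
proof -
  have "t < k"
    using basis_index_fst_le[OF assms(3)] \<open>t < t'\<close> by simp
  then have "j < p ^ (k - t) - p ^ (k - t - 1)"
    using tj by (simp add: basis_index_def)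
  moreover have "p ^ (k - t') \<le> p ^ (k - t - 1)" "p ^ (k - t - 1) \<le> p ^ (k - t)" "p ^ (k - t) \<le> p ^ k"
    using \<open>p > 0\<close> \<open>t < t'\<close> by (auto intro!: power_increasing)
  ultimately show ?thesis
    unfolding basis_degree_def prod.case by arith
qed

lemma basis_degree_less:
  assumes "p > 0" and tj: "(t, j) \<in> basis_index p k"
  shows "basis_degree p k (t, j) < p ^ k"
proof (cases "t < k")
  case True
  then have "j < p ^ (k - t) - p ^ (k - t - 1)"
    using tj by (simp add: basis_index_def)
  moreover have "1 \<le> p ^ (k - t - 1)" "p ^ (k - t) \<le> p ^ k"
    using \<open>p > 0\<close> by (auto intro!: power_increasing)
  ultimately show ?thesis
    unfolding basis_degree_def by simp
next
  case False
  then have "t = k" "j = 0"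
    using tj by (auto simp: basis_index_def)
  then show ?thesis
    using \<open>p > 0\<close> by (simp add: basis_degree_def)
qed

lemma inj_on_basis_degree:
  assumes "p > 0"
  shows "inj_on (basis_degree p k) (basis_index p k)"
proof (rule inj_onI)
  fix x y assume x: "x \<in> basis_index p k" and y: "y \<in> basis_index p k"
    and eq: "basis_degree p k x = basis_degree p k y"
  obtain t j t' j' where xy: "x = (t, j)" "y = (t', j')"
    by force
  have "t = t'"
    using basis_degree_strict_mono[OF assms, of t j k t' j'] basis_degree_strict_mono[OF assms, of t' j' k t j]
      x y eq xy by (cases t t' rule: linorder_cases) auto
  then show "x = y"
    using eq xy by (simp add: basis_degree_def)
qed

definition basis_poly :: "int \<Rightarrow> nat \<Rightarrow> nat \<Rightarrow> nat \<times> nat \<Rightarrow> rat poly" where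
  "basis_poly r p k = (\<lambda>(t, j).
     Polynomial.smult (1 / of_nat (p ^ t)) (Polynomial.monom 1 j * map_poly of_int (hpoly r p k t)))"

lemma poly_basis_poly: "poly (map_poly of_rat (basis_poly r p k i)) \<alpha> = basis_elem r p k \<alpha> i"
proof -
  interpret of_rat_poly_hom: map_poly_comm_ring_hom "of_rat :: rat \<Rightarrow> complex" ..
  show ?thesis
    by (cases i) (simp add: basis_poly_def basis_elem_def hom_distribs poly_monom map_poly_map_poly
        o_def of_rat_divide)
qed

lemma
  assumes "p > 0" and "i \<in> basis_index p k"
  shows degree_basis_poly: "degree (basis_poly r p k i) = basis_degree p k i"
    and basis_poly_nonzero: "basis_poly r p k i \<noteq> 0"
proof -
  obtain t j where i: "i = (t, j)"
    by force
  define H :: "rat poly" where "H = map_poly of_int (hpoly r p k t)"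
  define h :: "rat poly" where "h = Polynomial.monom 1 j * H"
  have "t \<le> k"
    using assms(2) by (simp add: i basis_index_fst_le)
  then have "lead_coeff H = 1" "degree H = p ^ k - p ^ (k - t)"
    using lead_coeff_hpoly[OF assms(1)] degree_hpoly[OF assms(1)] by (simp_all add: H_def)
  moreover from this have "H \<noteq> 0"
    by auto
  ultimately have "lead_coeff h = 1" "degree h = j + (p ^ k - p ^ (k - t))"
    by (simp_all add: h_def degree_mult_eq degree_monom_eq coeff_monom_mult)
  moreover have "basis_poly r p k i = Polynomial.smult (1 / of_nat (p ^ t)) h"
    by (simp add: basis_poly_def i h_def H_def)
  ultimately show "degree (basis_poly r p k i) = basis_degree p k i" "basis_poly r p k i \<noteq> 0"
    using assms(1) by (auto simp: basis_degree_def i)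
qed

lemma basis_elem_linear_independent:
  fixes m r :: int and \<alpha> :: complex and c :: "nat \<times> nat \<Rightarrow> rat"
  assumes "squarefree m" and "\<not> is_unit m" and "p > 0" and \<alpha>: "\<alpha> ^ (p ^ k) = of_int m"
    and sum: "(\<Sum>i\<in>basis_index p k. of_rat (c i) * basis_elem r p k \<alpha> i) = 0"
    and "i \<in> basis_index p k"
  shows "c i = 0"
proof -
  interpret of_rat_poly_hom: map_poly_comm_ring_hom "of_rat :: rat \<Rightarrow> complex" ..
  define Q where "Q = (\<Sum>i\<in>basis_index p k. Polynomial.smult (c i) (basis_poly r p k i))"
  have root: "poly (map_poly of_rat Q) \<alpha> = 0"
    using sum by (simp add: Q_def hom_distribs poly_sum poly_basis_poly)
  have deg: "degree Q < p ^ k"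
    unfolding Q_def using \<open>p > 0\<close>
    by (intro degree_sum_less le_less_trans[OF degree_smult_le])
      (auto simp: degree_basis_poly basis_degree_less)
  have "Q = 0"
  proof (rule ccontr)
    assume "Q \<noteq> 0"
    then have "p ^ k \<le> degree Q"
      using root \<open>p > 0\<close> by (intro degree_ge_of_pure_root[OF assms(1,2) _ \<alpha>]) simp_all
    with deg show False
      by simp
  qed
  have "inj_on (\<lambda>i. degree (basis_poly r p k i)) (basis_index p k) \<longleftrightarrow>
      inj_on (basis_degree p k) (basis_index p k)"
    by (rule inj_on_cong) (simp add: degree_basis_poly[OF \<open>p > 0\<close>])
  then have inj: "inj_on (\<lambda>i. degree (basis_poly r p k i)) (basis_index p k)"
    using inj_on_basis_degree[OF \<open>p > 0\<close>] by blast
  show "c i = 0"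
    using finite_basis_index inj basis_poly_nonzero[OF \<open>p > 0\<close>] \<open>Q = 0\<close>[unfolded Q_def]
      \<open>i \<in> basis_index p k\<close>
    by (rule sum_smult_eq_0_distinct_degrees)
qed

theorem corollary3p3:
  fixes m :: int and p k :: nat and \<alpha> :: complex
  assumes "squarefree m" and "m \<noteq> 1" and "m \<noteq> -1"
    and "prime p" and "k > 0"
    and "\<alpha> ^ (p ^ k) = of_int m"
    and "int k \<le> int (multiplicity (int p) (m ^ p - m)) - 1"
  shows "(\<forall>i \<in> basis_index p k. algebraic_int (basis_elem (m mod int p ^ (k + 1)) p k \<alpha> i))
    \<and> (\<forall>c :: nat \<times> nat \<Rightarrow> rat.
         (\<Sum>i \<in> basis_index p k. of_rat (c i) * basis_elem (m mod int p ^ (k + 1)) p k \<alpha> i) = 0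
         \<longrightarrow> (\<forall>i \<in> basis_index p k. c i = 0))"
proof -
  have "\<not> is_unit m"
    using assms(2,3) by auto
  have "p > 0"
    using assms(4) by (rule prime_gt_0_nat)
  have "int p ^ (k + 1) dvd m ^ p - m"
    using assms(7) by (intro multiplicity_dvd') linarith
  show ?thesis
  proof (intro conjI ballI allI impI)
    fix i assume "i \<in> basis_index p k"
    then show "algebraic_int (basis_elem (m mod int p ^ (k + 1)) p k \<alpha> i)"
      using algebraic_int_basis_elem[OF assms(4,6) \<open>int p ^ (k + 1) dvd m ^ p - m\<close>] by (cases i) simp
  next
    fix c i
    assume "(\<Sum>i \<in> basis_index p k. of_rat (c i) * basis_elem (m mod int p ^ (k + 1)) p k \<alpha> i) = 0"
      and "i \<in> basis_index p k"
    then show "c i = 0"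
      by (rule basis_elem_linear_independent[OF assms(1) \<open>\<not> is_unit m\<close> \<open>p > 0\<close> assms(6)])
  qed
qed

end
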